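(* Let $\Gamma$ be a group and $S$ a $\Gamma$-graded regular semigroup. Then the map $I\mapsto I_\varepsilon:=S_\varepsilon\cap I$ is a one-to-one, inclusion-preserving correspondence between the left ideals of $S$ and the left ideals of $S_\varepsilon$ (with inverse $J\mapsto SJ$); likewise for right ideals.
   Context: Semigroups have a zero; $S$ is $\Gamma$-graded via $\deg:S\setminus\{0\}\to\Gamma$ with $\deg(st)=\deg(s)\deg(t)$ whenever $st\neq0$; $S_\alpha=\deg^{-1}(\alpha)\cup\{0\}$, $\varepsilon$ the identity of $\Gamma$. $S$ is regular if every $s$ has $t$ with $sts=s$. *)

theory Defs
  imports Main
begin

text \<open>The semigroup with zero S is the whole type 'a (class semigroup_mult with an
absorbing zero, class mult_zero). The group Gamma is a type 'g of class group_add,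
written additively: its identity epsilon is 0 and the group product is +.\<close>

definition graded :: "('a::{semigroup_mult,mult_zero} \<Rightarrow> 'g::group_add) \<Rightarrow> bool" where
  "graded deg \<longleftrightarrow> (\<forall>s t. s * t \<noteq> 0 \<longrightarrow> deg (s * t) = deg s + deg t)"

definition homog :: "('a::{semigroup_mult,mult_zero} \<Rightarrow> 'g) \<Rightarrow> 'g \<Rightarrow> 'a set" where
  "homog deg \<alpha> = {s. s \<noteq> 0 \<and> deg s = \<alpha>} \<union> {0}"

definition regular_sg :: "'a::semigroup_mult itself \<Rightarrow> bool" where
  "regular_sg _ \<longleftrightarrow> (\<forall>s::'a. \<exists>t. s * t * s = s)"

definition setmul :: "'a::times set \<Rightarrow> 'a set \<Rightarrow> 'a set" where
  "setmul A B = {a * b | a b. a \<in> A \<and> b \<in> B}"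

definition left_ideal :: "'a::times set \<Rightarrow> 'a set \<Rightarrow> bool" where
  "left_ideal A I \<longleftrightarrow> I \<noteq> {} \<and> I \<subseteq> A \<and> (\<forall>a\<in>A. \<forall>x\<in>I. a * x \<in> I)"

definition right_ideal :: "'a::times set \<Rightarrow> 'a set \<Rightarrow> bool" where
  "right_ideal A I \<longleftrightarrow> I \<noteq> {} \<and> I \<subseteq> A \<and> (\<forall>a\<in>A. \<forall>x\<in>I. x * a \<in> I)"

end

theory Submission
  imports Defs
begin

text \<open>In a regular semigroup every s factors as s = s (t s) = (s t) s with the idempotents
t s and s t, and idempotents have degree \<open>\<epsilon>\<close>, since deg e = deg e + deg e in a group.
Hence a one-sided ideal I is generated by its homogeneous part \<open>I\<^sub>\<epsilon>\<close>. Conversely, if J is a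
left ideal of \<open>S\<^sub>\<epsilon>\<close> and s j has degree \<open>\<epsilon>\<close> with j in J and s j nonzero, then cancelling
deg j = \<open>\<epsilon>\<close> gives s in \<open>S\<^sub>\<epsilon>\<close>, so s j is already in J; thus \<open>S\<^sub>\<epsilon> \<inter> S J = J\<close>.\<close>

lemma monotone_inverses_order_iso:
  fixes f :: "'a::order \<Rightarrow> 'b::order"
  assumes "f ` A \<subseteq> B" "g ` B \<subseteq> A"
    and "\<And>a. a \<in> A \<Longrightarrow> g (f a) = a" "\<And>b. b \<in> B \<Longrightarrow> f (g b) = b"
    and "mono f" "mono g"
  shows "bij_betw f A B" and "\<And>x y. x \<in> A \<Longrightarrow> y \<in> A \<Longrightarrow> x \<le> y \<longleftrightarrow> f x \<le> f y"
proof -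
  show "bij_betw f A B"
    using assms(1-4) by (intro bij_betw_byWitness[where f' = g]) auto
  show "x \<le> y \<longleftrightarrow> f x \<le> f y" if "x \<in> A" "y \<in> A" for x y
  proof
    assume "f x \<le> f y"
    then have "g (f x) \<le> g (f y)" by (rule monoD[OF \<open>mono g\<close>])
    then show "x \<le> y" using assms(3) that by simp
  qed (use \<open>mono f\<close> in \<open>rule monoD\<close>)
qed

lemma mono_Int_fixed: "mono (\<lambda>I. A \<inter> I)"
  by (rule monoI) blast

lemma mono_setmul: "mono (setmul A)" "mono (\<lambda>B. setmul B A)"
  unfolding setmul_def by (rule monoI, blast)+

lemma regular_sgE:
  assumes "regular_sg TYPE('a::semigroup_mult)"
  obtains t where "(s::'a) * t * s = s"
  using assms unfolding regular_sg_def by blast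

lemma subset_setmul_UNIV_left:
  assumes "regular_sg TYPE('a::semigroup_mult)"
  shows "(J::'a set) \<subseteq> setmul UNIV J"
proof
  fix j assume "j \<in> J"
  obtain t where "j * t * j = j" using assms by (rule regular_sgE)
  then have "j = (j * t) * j" by simp
  then show "j \<in> setmul UNIV J" unfolding setmul_def using \<open>j \<in> J\<close> by blast
qed

lemma subset_setmul_UNIV_right:
  assumes "regular_sg TYPE('a::semigroup_mult)"
  shows "(J::'a set) \<subseteq> setmul J UNIV"
proof
  fix j assume "j \<in> J"
  obtain t where "j * t * j = j" using assms by (rule regular_sgE)
  then have "j = j * (t * j)" by (simp add: mult.assoc)
  then show "j \<in> setmul J UNIV" unfolding setmul_def using \<open>j \<in> J\<close> by blast
qed

lemma left_ideal_zero: "left_ideal A I \<Longrightarrow> (0::'a::mult_zero) \<in> A \<Longrightarrow> 0 \<in> I"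
  unfolding left_ideal_def by (metis all_not_in_conv mult_zero_left)

lemma right_ideal_zero: "right_ideal A I \<Longrightarrow> (0::'a::mult_zero) \<in> A \<Longrightarrow> 0 \<in> I"
  unfolding right_ideal_def by (metis all_not_in_conv mult_zero_right)

lemma left_ideal_setmul_UNIV:
  fixes J :: "'a::semigroup_mult set"
  assumes "left_ideal A J"
  shows "left_ideal UNIV (setmul UNIV J)"
  using assms unfolding left_ideal_def setmul_def by (auto simp flip: mult.assoc)

lemma right_ideal_setmul_UNIV:
  fixes J :: "'a::semigroup_mult set"
  assumes "right_ideal A J"
  shows "right_ideal UNIV (setmul J UNIV)"
  using assms unfolding right_ideal_def setmul_def by auto (metis mult.assoc)

lemma homog_0_iff: "x \<in> homog deg 0 \<longleftrightarrow> x = 0 \<or> deg x = 0"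
  unfolding homog_def by auto

lemma zero_in_homog: "0 \<in> homog deg \<alpha>"
  unfolding homog_def by simp

context
  fixes deg :: "'a::{semigroup_mult,mult_zero} \<Rightarrow> 'g::group_add"
  assumes graded: "graded deg"
begin

lemma idempotent_in_homog_0:
  assumes "e * e = e"
  shows "e \<in> homog deg 0"
proof (cases "e = 0")
  case False
  then have "deg e + deg e = deg e + 0"
    using graded assms unfolding graded_def by (metis add_0_right)
  then have "deg e = 0" by (rule add_left_imp_eq)
  then show ?thesis by (simp add: homog_0_iff)
qed (simp add: homog_0_iff)

lemma mult_in_homog_0: "a \<in> homog deg 0 \<Longrightarrow> b \<in> homog deg 0 \<Longrightarrow> a * b \<in> homog deg 0"
  using graded unfolding homog_0_iff graded_def by (metis add_0 mult_zero_left mult_zero_right)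

lemma left_factor_in_homog_0:
  assumes "s * j \<in> homog deg 0" "j \<in> homog deg 0" "s * j \<noteq> 0"
  shows "s \<in> homog deg 0"
proof -
  have "j \<noteq> 0" using assms(3) by auto
  moreover have "deg s + deg j = 0"
    using assms graded unfolding graded_def homog_0_iff by metis
  ultimately show ?thesis using assms(2) by (simp add: homog_0_iff)
qed

lemma right_factor_in_homog_0:
  assumes "j * s \<in> homog deg 0" "j \<in> homog deg 0" "j * s \<noteq> 0"
  shows "s \<in> homog deg 0"
proof -
  have "j \<noteq> 0" using assms(3) by auto
  moreover have "deg j + deg s = 0"
    using assms graded unfolding graded_def homog_0_iff by metis
  ultimately show ?thesis using assms(2) by (simp add: homog_0_iff)
qed

lemma left_ideal_homog_0_Int:
  assumes I: "left_ideal UNIV I"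
  shows "left_ideal (homog deg 0) (homog deg 0 \<inter> I)"
proof -
  have "0 \<in> homog deg 0 \<inter> I" using left_ideal_zero[OF I UNIV_I] by (simp add: zero_in_homog)
  then show ?thesis using I unfolding left_ideal_def by (auto intro: mult_in_homog_0)
qed

lemma right_ideal_homog_0_Int:
  assumes I: "right_ideal UNIV I"
  shows "right_ideal (homog deg 0) (homog deg 0 \<inter> I)"
proof -
  have "0 \<in> homog deg 0 \<inter> I" using right_ideal_zero[OF I UNIV_I] by (simp add: zero_in_homog)
  then show ?thesis using I unfolding right_ideal_def by (auto intro: mult_in_homog_0)
qed

context
  assumes regular: "regular_sg TYPE('a)"
begin

lemma setmul_UNIV_homog_0_Int:
  assumes I: "left_ideal UNIV I"
  shows "setmul UNIV (homog deg 0 \<inter> I) = I"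
proof
  show "setmul UNIV (homog deg 0 \<inter> I) \<subseteq> I"
    using I unfolding setmul_def left_ideal_def by auto
  show "I \<subseteq> setmul UNIV (homog deg 0 \<inter> I)"
  proof
    fix s assume "s \<in> I"
    obtain t where t: "s * t * s = s" using regular by (rule regular_sgE)
    then have "(t * s) * (t * s) = t * s" by (metis mult.assoc)
    then have "t * s \<in> homog deg 0" by (rule idempotent_in_homog_0)
    moreover have "t * s \<in> I" using I \<open>s \<in> I\<close> unfolding left_ideal_def by auto
    moreover have "s = s * (t * s)" using t by (simp add: mult.assoc)
    ultimately show "s \<in> setmul UNIV (homog deg 0 \<inter> I)" unfolding setmul_def by blast
  qed
qed

lemma setmul_homog_0_Int_UNIV:
  assumes I: "right_ideal UNIV I"
  shows "setmul (homog deg 0 \<inter> I) UNIV = I"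
proof
  show "setmul (homog deg 0 \<inter> I) UNIV \<subseteq> I"
    using I unfolding setmul_def right_ideal_def by auto
  show "I \<subseteq> setmul (homog deg 0 \<inter> I) UNIV"
  proof
    fix s assume "s \<in> I"
    obtain t where t: "s * t * s = s" using regular by (rule regular_sgE)
    then have "(s * t) * (s * t) = s * t" by (metis mult.assoc)
    then have "s * t \<in> homog deg 0" by (rule idempotent_in_homog_0)
    moreover have "s * t \<in> I" using I \<open>s \<in> I\<close> unfolding right_ideal_def by auto
    moreover have "s = (s * t) * s" using t by simp
    ultimately show "s \<in> setmul (homog deg 0 \<inter> I) UNIV" unfolding setmul_def by blast
  qed
qed

lemma homog_0_Int_setmul_UNIV_left:
  assumes J: "left_ideal (homog deg 0) J"
  shows "homog deg 0 \<inter> setmul UNIV J = J"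
proof
  show "homog deg 0 \<inter> setmul UNIV J \<subseteq> J"
  proof
    fix x assume x: "x \<in> homog deg 0 \<inter> setmul UNIV J"
    then obtain s j where sj: "x = s * j" "j \<in> J" unfolding setmul_def by blast
    show "x \<in> J"
    proof (cases "x = 0")
      case True
      then show ?thesis using left_ideal_zero[OF J zero_in_homog] by simp
    next
      case False
      have "j \<in> homog deg 0" using J sj unfolding left_ideal_def by auto
      then have "s \<in> homog deg 0" using left_factor_in_homog_0 x sj False by auto
      then show ?thesis using J sj unfolding left_ideal_def by auto
    qed
  qed
  show "J \<subseteq> homog deg 0 \<inter> setmul UNIV J"
    using J subset_setmul_UNIV_left[OF regular] unfolding left_ideal_def by blast
qed

lemma homog_0_Int_setmul_UNIV_right:
  assumes J: "right_ideal (homog deg 0) J"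
  shows "homog deg 0 \<inter> setmul J UNIV = J"
proof
  show "homog deg 0 \<inter> setmul J UNIV \<subseteq> J"
  proof
    fix x assume x: "x \<in> homog deg 0 \<inter> setmul J UNIV"
    then obtain s j where sj: "x = j * s" "j \<in> J" unfolding setmul_def by blast
    show "x \<in> J"
    proof (cases "x = 0")
      case True
      then show ?thesis using right_ideal_zero[OF J zero_in_homog] by simp
    next
      case False
      have "j \<in> homog deg 0" using J sj unfolding right_ideal_def by auto
      then have "s \<in> homog deg 0" using right_factor_in_homog_0 x sj False by auto
      then show ?thesis using J sj unfolding right_ideal_def by auto
    qed
  qed
  show "J \<subseteq> homog deg 0 \<inter> setmul J UNIV"
    using J subset_setmul_UNIV_right[OF regular] unfolding right_ideal_def by blast
qed

lemma left_ideal_correspondence: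
  shows "bij_betw (\<lambda>I. homog deg 0 \<inter> I) {I. left_ideal UNIV I} {J. left_ideal (homog deg 0) J}"
    and "left_ideal UNIV I1 \<Longrightarrow> left_ideal UNIV I2 \<Longrightarrow>
      I1 \<subseteq> I2 \<longleftrightarrow> homog deg 0 \<inter> I1 \<subseteq> homog deg 0 \<inter> I2"
proof -
  have restrict: "(\<lambda>I. homog deg 0 \<inter> I) ` {I. left_ideal UNIV I} \<subseteq> {J. left_ideal (homog deg 0) J}"
    using left_ideal_homog_0_Int by blast
  have extend: "setmul UNIV ` {J. left_ideal (homog deg 0) J} \<subseteq> {I. left_ideal UNIV I}"
    using left_ideal_setmul_UNIV by blast
  note iso = monotone_inverses_order_iso[OF restrict extend _ _ mono_Int_fixed mono_setmul(1)]
  note inverse = setmul_UNIV_homog_0_Int homog_0_Int_setmul_UNIV_left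
  show "bij_betw (\<lambda>I. homog deg 0 \<inter> I) {I. left_ideal UNIV I} {J. left_ideal (homog deg 0) J}"
    by (rule iso(1)) (simp_all add: inverse)
  show "left_ideal UNIV I1 \<Longrightarrow> left_ideal UNIV I2 \<Longrightarrow>
      I1 \<subseteq> I2 \<longleftrightarrow> homog deg 0 \<inter> I1 \<subseteq> homog deg 0 \<inter> I2"
    by (rule iso(2)) (simp_all add: inverse)
qed

lemma right_ideal_correspondence:
  shows "bij_betw (\<lambda>I. homog deg 0 \<inter> I) {I. right_ideal UNIV I} {J. right_ideal (homog deg 0) J}"
    and "right_ideal UNIV I1 \<Longrightarrow> right_ideal UNIV I2 \<Longrightarrow>
      I1 \<subseteq> I2 \<longleftrightarrow> homog deg 0 \<inter> I1 \<subseteq> homog deg 0 \<inter> I2"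
proof -
  have restrict: "(\<lambda>I. homog deg 0 \<inter> I) ` {I. right_ideal UNIV I} \<subseteq> {J. right_ideal (homog deg 0) J}"
    using right_ideal_homog_0_Int by blast
  have extend: "(\<lambda>J. setmul J UNIV) ` {J. right_ideal (homog deg 0) J} \<subseteq> {I. right_ideal UNIV I}"
    using right_ideal_setmul_UNIV by blast
  note iso = monotone_inverses_order_iso[OF restrict extend _ _ mono_Int_fixed mono_setmul(2)]
  note inverse = setmul_homog_0_Int_UNIV homog_0_Int_setmul_UNIV_right
  show "bij_betw (\<lambda>I. homog deg 0 \<inter> I) {I. right_ideal UNIV I} {J. right_ideal (homog deg 0) J}"
    by (rule iso(1)) (simp_all add: inverse)
  show "right_ideal UNIV I1 \<Longrightarrow> right_ideal UNIV I2 \<Longrightarrow>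
      I1 \<subseteq> I2 \<longleftrightarrow> homog deg 0 \<inter> I1 \<subseteq> homog deg 0 \<inter> I2"
    by (rule iso(2)) (simp_all add: inverse)
qed

end

end

theorem proposition2p7:
  fixes deg :: "'a::{semigroup_mult,mult_zero} \<Rightarrow> 'g::group_add"
  assumes "graded deg" and "regular_sg TYPE('a)"
  shows
   "bij_betw (\<lambda>I. homog deg 0 \<inter> I) {I. left_ideal UNIV I} {J. left_ideal (homog deg 0) J}
    \<and> (\<forall>I1 I2. left_ideal UNIV I1 \<longrightarrow> left_ideal UNIV I2 \<longrightarrow>
          (I1 \<subseteq> I2 \<longleftrightarrow> homog deg 0 \<inter> I1 \<subseteq> homog deg 0 \<inter> I2))
    \<and> (\<forall>I. left_ideal UNIV I \<longrightarrow> setmul UNIV (homog deg 0 \<inter> I) = I)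
    \<and> (\<forall>J. left_ideal (homog deg 0) J \<longrightarrow> left_ideal UNIV (setmul UNIV J)
          \<and> homog deg 0 \<inter> setmul UNIV J = J)
    \<and> bij_betw (\<lambda>I. homog deg 0 \<inter> I) {I. right_ideal UNIV I} {J. right_ideal (homog deg 0) J}
    \<and> (\<forall>I1 I2. right_ideal UNIV I1 \<longrightarrow> right_ideal UNIV I2 \<longrightarrow>
          (I1 \<subseteq> I2 \<longleftrightarrow> homog deg 0 \<inter> I1 \<subseteq> homog deg 0 \<inter> I2))
    \<and> (\<forall>I. right_ideal UNIV I \<longrightarrow> setmul (homog deg 0 \<inter> I) UNIV = I)
    \<and> (\<forall>J. right_ideal (homog deg 0) J \<longrightarrow> right_ideal UNIV (setmul J UNIV)
          \<and> homog deg 0 \<inter> setmul J UNIV = J)"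
proof (intro conjI allI impI)
qed (simp_all add: left_ideal_correspondence[OF assms] right_ideal_correspondence[OF assms]
    setmul_UNIV_homog_0_Int[OF assms] setmul_homog_0_Int_UNIV[OF assms]
    homog_0_Int_setmul_UNIV_left[OF assms] homog_0_Int_setmul_UNIV_right[OF assms]
    left_ideal_setmul_UNIV right_ideal_setmul_UNIV)

end
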